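(* Let $q\ge2$ be even and $d\ge q$. Let $f$ be a density on $\mathbb{R}^d$ with mode $\boldsymbol\theta$, sufficiently smooth, whose $(q+1)$-st order term of the Taylor expansion around $\boldsymbol\theta$ is of the form $\mathbf a^\top(\mathbf x-\boldsymbol\theta)\prod_{i=1}^{q/2}\frac12(\mathbf x-\boldsymbol\theta)^\top\mathrm R_i(\mathbf x-\boldsymbol\theta)$, where $\mathbf a\ne\mathbf 0$ and $\mathrm R_1,\ldots,\mathrm R_{q/2}$ are positive definite. Then the asymptotic bias cannot be made equal to zero by any choice of $\mathrm Q$, i.e. $\nabla(\nabla^\top\mathrm Q\nabla)^{q/2}f(\boldsymbol\theta)\ne\mathbf 0$ for every symmetric positive definite $\mathrm Q$.
   Context: Setting: $\mathrm A=\{Hf(\boldsymbol\theta)\}^{-1}$ is assumed to exist. For a radial $q$-th order kernel $K(\mathbf x)=G(\|\mathbf x\|)$ and a $d\times d$ matrix $\mathrm P$ with $|\det\mathrm P|=1$, the elliptic kernel is $K_{\mathrm P}(\mathbf x)=K(\mathrm P\mathbf x)$ and $\mathrm Q=\mathrm P^{-1}\mathrm P^{-\top}$ (symmetric positive definite). The asymptotic bias of the kernel mode estimator with kernel $K_{\mathrm P}$ is $-\frac{\pi^{d/2}h_n^q}{2^{q-1}\Gamma(\frac{d+q}{2})\Gamma(\frac q2+1)}B_{d,q}(G)\,\mathrm A\,\nabla(\nabla^\top\mathrm Q\nabla)^{q/2}f(\boldsymbol\theta)$ with $B_{d,q}(G)\neq0$, so it vanishes iff $\nabla(\nabla^\top\mathrm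 Q\nabla)^{q/2}f(\boldsymbol\theta)=\mathbf 0$. *)

theory Defs
  imports "HOL-Analysis.Analysis"
begin

definition partial :: "'n::finite \<Rightarrow> (real^'n \<Rightarrow> real) \<Rightarrow> real^'n \<Rightarrow> real" where
  "partial i g x = deriv (\<lambda>t. g (x + t *\<^sub>R axis i 1)) 0"

definition iter_partial :: "'n::finite list \<Rightarrow> (real^'n \<Rightarrow> real) \<Rightarrow> real^'n \<Rightarrow> real" where
  "iter_partial is g = foldr partial is g"

definition C_k :: "nat \<Rightarrow> (real^'n::finite \<Rightarrow> real) \<Rightarrow> bool" where
  "C_k k g \<longleftrightarrow>
     (\<forall>is. length is \<le> k \<longrightarrow> continuous_on UNIV (iter_partial is g)) \<and>
     (\<forall>is. length is < k \<longrightarrow>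
        (\<forall>i x. (\<lambda>t. iter_partial is g (x + t *\<^sub>R axis i 1)) differentiable (at 0)))"

definition pos_def_mat :: "real^'n^'n \<Rightarrow> bool" where
  "pos_def_mat M \<longleftrightarrow> transpose M = M \<and> (\<forall>y. y \<noteq> 0 \<longrightarrow> y \<bullet> (M *v y) > 0)"

definition taylor_term :: "nat \<Rightarrow> (real^'n::finite \<Rightarrow> real) \<Rightarrow> real^'n \<Rightarrow> real^'n \<Rightarrow> real" where
  "taylor_term k g th y = (deriv ^^ k) (\<lambda>t. g (th + t *\<^sub>R y)) 0 / fact k"

definition quad_op :: "real^'n^'n \<Rightarrow> (real^'n::finite \<Rightarrow> real) \<Rightarrow> real^'n \<Rightarrow> real" where
  "quad_op Q g x = (\<Sum>i\<in>UNIV. \<Sum>j\<in>UNIV. Q $ i $ j * partial i (partial j g) x)"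

definition grad :: "(real^'n::finite \<Rightarrow> real) \<Rightarrow> real^'n \<Rightarrow> real^'n" where
  "grad g x = (\<chi> k. partial k g x)"

definition hessian :: "(real^'n::finite \<Rightarrow> real) \<Rightarrow> real^'n \<Rightarrow> real^'n^'n" where
  "hessian g x = (\<chi> i j. partial i (partial j g) x)"

end

theory Submission
  imports Defs "HOL-Probability.Probability"
begin

text \<open>Factor \<open>Q = M M\<^sup>T\<close> and let \<open>Z = M X\<close> with \<open>X\<close> standard normal, a centred Gaussian vector
  with covariance \<open>Q\<close>. Expanding the \<open>(q+1)\<close>-st Taylor term in partial derivatives gives the
  polynomial \<open>P(y) = (q+1)! (a \<bullet> y) \<Prod>\<^sub>i (1/2) y\<^sup>T R\<^sub>i y\<close>, so \<open>(a \<bullet> Z) P(Z) \<ge> 0\<close>; it is not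
  almost surely zero because \<open>E[(a \<bullet> Z)\<^sup>2] = a\<^sup>T Q a > 0\<close>, hence \<open>E[(a \<bullet> Z) P(Z)] > 0\<close>.
  Gaussian integration by parts (Isserlis' theorem) evaluates the same expectation as
  \<open>(q+1) (q-1)!! a\<^sup>T Q \<nabla>(\<nabla>\<^sup>T Q \<nabla>)\<^bsup>q/2\<^esup> f(\<theta>)\<close>, so this gradient cannot vanish.\<close>

section \<open>Iterated partial derivatives\<close>

lemma iter_partial_Nil [simp]: "iter_partial [] g = g"
  by (simp add: iter_partial_def)

lemma iter_partial_Cons [simp]: "iter_partial (i # is) g = partial i (iter_partial is g)"
  by (simp add: iter_partial_def)

lemma iter_partial_append: "iter_partial (xs @ ys) g = iter_partial xs (iter_partial ys g)"
  by (simp add: iter_partial_def)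

lemma C_k_iter_partial:
  assumes "C_k k g" and "length is + l \<le> k"
  shows "C_k l (iter_partial is g)"
  using assms by (auto simp: C_k_def simp flip: iter_partial_append)

lemma C_k_mono: "C_k k g \<Longrightarrow> l \<le> k \<Longrightarrow> C_k l g"
  using C_k_iter_partial[of k g "[]" l] by simp

lemma C_k_continuous_on: "C_k k g \<Longrightarrow> length is \<le> k \<Longrightarrow> continuous_on UNIV (iter_partial is g)"
  by (simp add: C_k_def)

lemma C_k_continuous_on_partial: "C_k k g \<Longrightarrow> 0 < k \<Longrightarrow> continuous_on UNIV (partial i g)"
  unfolding C_k_def by (elim conjE allE[of _ "[i]"]) simp

lemma C_k_differentiable_iter_partial:
  "C_k k g \<Longrightarrow> length is < k \<Longrightarrow> (\<lambda>t. iter_partial is g (x + t *\<^sub>R axis i 1)) differentiable (at 0)"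
  by (simp add: C_k_def)

lemma has_real_derivative_partial:
  fixes g :: "real^'n \<Rightarrow> real"
  assumes "C_k k g" and "0 < k"
  shows "((\<lambda>t. g (x + t *\<^sub>R axis i 1)) has_real_derivative partial i g (x + s *\<^sub>R axis i 1)) (at s)"
proof -
  have "((\<lambda>t. g ((x + s *\<^sub>R axis i 1) + t *\<^sub>R axis i 1)) has_real_derivative
      partial i g (x + s *\<^sub>R axis i 1)) (at 0)"
    unfolding partial_def
    using C_k_differentiable_iter_partial[OF assms(1), of "[]"] assms(2) by (simp add: DERIV_deriv_iff_real_differentiable)
  then show ?thesis
    using DERIV_shift[of "\<lambda>t. g (x + t *\<^sub>R axis i 1)" _ 0 s] by (simp add: algebra_simps)
qed

lemma MVT_abs_le:
  fixes \<phi> :: "real \<Rightarrow> real"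
  assumes "\<And>t. (\<phi> has_real_derivative \<phi>' t) (at t)"
  obtains \<xi> where "\<bar>\<xi>\<bar> \<le> \<bar>b\<bar>" and "\<phi> b - \<phi> 0 = b * \<phi>' \<xi>"
proof (cases b "0::real" rule: linorder_cases)
  case less
  then obtain \<xi> where "b < \<xi>" "\<xi> < 0" "\<phi> 0 - \<phi> b = (0 - b) * \<phi>' \<xi>"
    using MVT2[of b 0 \<phi> \<phi>'] assms by blast
  then show ?thesis by (intro that[of \<xi>]) (auto simp: algebra_simps)
next
  case equal
  then show ?thesis by (intro that[of 0]) auto
next
  case greater
  then obtain \<xi> where "0 < \<xi>" "\<xi> < b" "\<phi> b - \<phi> 0 = (b - 0) * \<phi>' \<xi>"
    using MVT2[of 0 b \<phi> \<phi>'] assms by blast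
  then show ?thesis by (intro that[of \<xi>]) auto
qed

lemma axis_increment_bound:
  fixes g :: "real^'n \<Rightarrow> real"
  assumes g: "C_k 1 g" and near: "\<And>s. \<bar>s\<bar> \<le> \<bar>b\<bar> \<Longrightarrow> \<bar>partial k g (x + s *\<^sub>R axis k 1) - c\<bar> \<le> e"
  shows "\<bar>g (x + b *\<^sub>R axis k 1) - g x - b * c\<bar> \<le> e * \<bar>b\<bar>"
proof -
  obtain \<xi> where "\<bar>\<xi>\<bar> \<le> \<bar>b\<bar>"
    and mvt: "g (x + b *\<^sub>R axis k 1) - g (x + 0 *\<^sub>R axis k 1) = b * partial k g (x + \<xi> *\<^sub>R axis k 1)"
    using MVT_abs_le[OF has_real_derivative_partial[OF g, of x k]] by auto
  from near[OF this(1)]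
  have "\<bar>b * (partial k g (x + \<xi> *\<^sub>R axis k 1) - c)\<bar> \<le> e * \<bar>b\<bar>"
    unfolding abs_mult mult.commute[of "\<bar>b\<bar>"] by (rule mult_right_mono) simp
  with mvt show ?thesis
    by (simp add: right_diff_distrib)
qed

text \<open>One coordinate at a time by the mean value theorem: the usual proof that continuous partial
  derivatives give a Frechet derivative.\<close>

lemma partials_increment_bound:
  fixes g :: "real^'n \<Rightarrow> real"
  assumes g: "C_k 1 g"
    and near: "\<And>i z. norm (z - p) < d \<Longrightarrow> \<bar>partial i g z - partial i g p\<bar> \<le> e"
    and "finite S" and "\<And>i. i \<notin> S \<Longrightarrow> h $ i = 0" and "norm h < d"
  shows "\<bar>g (p + h) - g p - (\<Sum>i\<in>S. h $ i * partial i g p)\<bar> \<le> e * (\<Sum>i\<in>S. \<bar>h $ i\<bar>)"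
  using assms(3-5)
proof (induction S arbitrary: h)
  case empty
  then have "h = 0" by (simp add: vec_eq_iff)
  then show ?case by simp
next
  case (insert k S)
  define h' where "h' = h - h $ k *\<^sub>R axis k 1"
  have h'_comp: "h' $ i = (if i = k then 0 else h $ i)" for i
    by (simp add: h'_def axis_def)
  have "norm h' \<le> norm h"
    by (rule norm_le_componentwise_cart) (simp add: h'_comp)
  then have IH: "\<bar>g (p + h') - g p - (\<Sum>i\<in>S. h' $ i * partial i g p)\<bar> \<le> e * (\<Sum>i\<in>S. \<bar>h' $ i\<bar>)"
    using insert.IH[of h'] insert.prems by (simp add: h'_comp)
  have "\<bar>partial k g (p + h' + s *\<^sub>R axis k 1) - partial k g p\<bar> \<le> e" if "\<bar>s\<bar> \<le> \<bar>h $ k\<bar>" for s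
  proof (rule near)
    have "norm (h' + s *\<^sub>R axis k 1) \<le> norm h"
      by (rule norm_le_componentwise_cart) (use that in \<open>simp add: h'_comp axis_def\<close>)
    with insert.prems(2) show "norm (p + h' + s *\<^sub>R axis k 1 - p) < d"
      by (simp add: add.assoc)
  qed
  from axis_increment_bound[OF g, where x = "p + h'" and b = "h $ k" and c = "partial k g p", OF this]
  have step: "\<bar>g (p + h) - g (p + h') - h $ k * partial k g p\<bar> \<le> e * \<bar>h $ k\<bar>"
    by (simp add: h'_def)
  have "(\<Sum>i\<in>S. h' $ i * partial i g p) = (\<Sum>i\<in>S. h $ i * partial i g p)"
    "(\<Sum>i\<in>S. \<bar>h' $ i\<bar>) = (\<Sum>i\<in>S. \<bar>h $ i\<bar>)"
    using insert.hyps by (auto simp: h'_comp intro!: sum.cong)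
  with insert.hyps
  have "g (p + h) - g p - (\<Sum>i\<in>insert k S. h $ i * partial i g p)
      = (g (p + h) - g (p + h') - h $ k * partial k g p) + (g (p + h') - g p - (\<Sum>i\<in>S. h' $ i * partial i g p))"
    and "e * (\<Sum>i\<in>insert k S. \<bar>h $ i\<bar>) = e * \<bar>h $ k\<bar> + e * (\<Sum>i\<in>S. \<bar>h' $ i\<bar>)"
    by (simp_all add: distrib_left)
  with IH step show ?case
    using abs_triangle_ineq[of "g (p + h) - g (p + h') - h $ k * partial k g p"
        "g (p + h') - g p - (\<Sum>i\<in>S. h' $ i * partial i g p)"]
    by linarith
qed

lemma has_derivative_grad:
  fixes g :: "real^'n \<Rightarrow> real"
  assumes g: "C_k 1 g"
  shows "(g has_derivative (\<lambda>h. h \<bullet> grad g p)) (at p)"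
  unfolding has_derivative_at_alt
proof (intro conjI allI impI bounded_linear_inner_left)
  fix e :: real assume "e > 0"
  define e' where "e' = e / real CARD('n)"
  have e': "e' > 0" using \<open>e > 0\<close> by (simp add: e'_def)
  have "continuous_on UNIV (grad g)"
    unfolding grad_def by (intro continuous_on_vec_lambda C_k_continuous_on_partial[OF g]) simp
  then obtain d where "d > 0" and d: "\<And>z. dist z p < d \<Longrightarrow> dist (grad g z) (grad g p) < e'"
    using e' unfolding continuous_on_iff by (metis UNIV_I)
  have near: "\<bar>partial i g z - partial i g p\<bar> \<le> e'" if "norm (z - p) < d" for i z
  proof -
    have "\<bar>(grad g z - grad g p) $ i\<bar> \<le> norm (grad g z - grad g p)"
      by (rule component_le_norm_cart)
    also have "\<dots> < e'"
      using d[of z] that by (simp add: dist_norm)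
    finally show ?thesis by (simp add: grad_def)
  qed
  show "\<exists>d>0. \<forall>y. norm (y - p) < d \<longrightarrow> norm (g y - g p - (y - p) \<bullet> grad g p) \<le> e * norm (y - p)"
  proof (intro exI[of _ d] conjI allI impI \<open>d > 0\<close>)
    fix y assume y: "norm (y - p) < d"
    have "(y - p) \<bullet> grad g p = (\<Sum>i\<in>UNIV. (y - p) $ i * partial i g p)"
      by (simp add: inner_vec_def grad_def)
    then have "norm (g y - g p - (y - p) \<bullet> grad g p)
        = \<bar>g (p + (y - p)) - g p - (\<Sum>i\<in>UNIV. (y - p) $ i * partial i g p)\<bar>"
      by simp
    also have "\<dots> \<le> e' * (\<Sum>i\<in>UNIV. \<bar>(y - p) $ i\<bar>)"
      using partials_increment_bound[OF g near finite_class.finite_UNIV, where h="y - p"] y by simp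
    also have "\<dots> \<le> e' * (\<Sum>i\<in>(UNIV::'n set). norm (y - p))"
      using e' by (intro mult_left_mono sum_mono component_le_norm_cart) auto
    also have "\<dots> = e * norm (y - p)"
      by (simp add: e'_def)
    finally show "norm (g y - g p - (y - p) \<bullet> grad g p) \<le> e * norm (y - p)" .
  qed
qed

lemma has_real_derivative_line:
  fixes g :: "real^'n \<Rightarrow> real"
  assumes "C_k 1 g"
  shows "((\<lambda>s. g (p + s *\<^sub>R y)) has_real_derivative (y \<bullet> grad g (p + t *\<^sub>R y))) (at t)"
proof -
  have "((\<lambda>s. p + s *\<^sub>R y) has_derivative (\<lambda>s. s *\<^sub>R y)) (at t)"
    by (auto intro!: derivative_eq_intros)
  from has_derivative_compose[OF this has_derivative_grad[OF assms]]
  show ?thesis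
    unfolding has_field_derivative_def
    by (rule has_derivative_eq_rhs) (auto simp: o_def fun_eq_iff)
qed

lemma second_difference_mean_value:
  fixes g :: "real^'n \<Rightarrow> real"
  assumes g: "C_k 2 g" and "0 < h"
  obtains \<xi> \<eta> where "0 < \<xi>" "\<xi> < h" "0 < \<eta>" "\<eta> < h"
    and "g (x + h *\<^sub>R axis i 1 + h *\<^sub>R axis j 1) - g (x + h *\<^sub>R axis i 1) - g (x + h *\<^sub>R axis j 1) + g x
           = h * h * partial j (partial i g) (x + \<xi> *\<^sub>R axis i 1 + \<eta> *\<^sub>R axis j 1)"
proof -
  define \<phi> where "\<phi> t = g ((x + h *\<^sub>R axis j 1) + t *\<^sub>R axis i 1) - g (x + t *\<^sub>R axis i 1)" for t
  define \<phi>' where "\<phi>' t = partial i g ((x + h *\<^sub>R axis j 1) + t *\<^sub>R axis i 1) - partial i g (x + t *\<^sub>R axis i 1)" for t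
  have "(\<phi> has_real_derivative \<phi>' t) (at t)" for t
    unfolding \<phi>_def \<phi>'_def using g by (intro DERIV_diff has_real_derivative_partial) auto
  then obtain \<xi> where \<xi>: "0 < \<xi>" "\<xi> < h" and \<phi>_diff: "\<phi> h - \<phi> 0 = (h - 0) * \<phi>' \<xi>"
    using MVT2[OF \<open>0 < h\<close>, of \<phi> \<phi>'] by blast
  define \<psi> where "\<psi> s = partial i g ((x + \<xi> *\<^sub>R axis i 1) + s *\<^sub>R axis j 1)" for s
  define \<psi>' where "\<psi>' s = partial j (partial i g) ((x + \<xi> *\<^sub>R axis i 1) + s *\<^sub>R axis j 1)" for s
  have "C_k 1 (partial i g)"
    using C_k_iter_partial[OF g, of "[i]" 1] by simp
  then have "(\<psi> has_real_derivative \<psi>' s) (at s)" for s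
    unfolding \<psi>_def \<psi>'_def by (rule has_real_derivative_partial) simp
  then obtain \<eta> where \<eta>: "0 < \<eta>" "\<eta> < h" and \<psi>_diff: "\<psi> h - \<psi> 0 = (h - 0) * \<psi>' \<eta>"
    using MVT2[OF \<open>0 < h\<close>, of \<psi> \<psi>'] by blast
  show ?thesis
  proof (rule that[OF \<xi> \<eta>])
    have "\<phi>' \<xi> = \<psi> h - \<psi> 0"
      by (simp add: \<phi>'_def \<psi>_def algebra_simps)
    with \<phi>_diff \<psi>_diff show "g (x + h *\<^sub>R axis i 1 + h *\<^sub>R axis j 1) - g (x + h *\<^sub>R axis i 1)
        - g (x + h *\<^sub>R axis j 1) + g x
      = h * h * partial j (partial i g) (x + \<xi> *\<^sub>R axis i 1 + \<eta> *\<^sub>R axis j 1)"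
      by (simp add: \<phi>_def \<psi>'_def algebra_simps)
  qed
qed

lemma second_difference_quotient_tendsto:
  fixes g :: "real^'n \<Rightarrow> real"
  assumes g: "C_k 2 g"
  shows "((\<lambda>h. (g (x + h *\<^sub>R axis i 1 + h *\<^sub>R axis j 1) - g (x + h *\<^sub>R axis i 1)
      - g (x + h *\<^sub>R axis j 1) + g x) / (h * h)) \<longlongrightarrow> partial j (partial i g) x) (at_right 0)"
proof (rule tendstoI)
  fix e :: real assume "0 < e"
  have "continuous_on UNIV (partial j (partial i g))"
    using C_k_continuous_on[OF g, of "[j, i]"] by simp
  then obtain d where "0 < d"
    and d: "\<And>z. dist z x < d \<Longrightarrow> dist (partial j (partial i g) z) (partial j (partial i g) x) < e"
    using \<open>0 < e\<close> unfolding continuous_on_iff by (metis UNIV_I)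
  show "\<forall>\<^sub>F h in at_right 0. dist ((g (x + h *\<^sub>R axis i 1 + h *\<^sub>R axis j 1) - g (x + h *\<^sub>R axis i 1)
      - g (x + h *\<^sub>R axis j 1) + g x) / (h * h)) (partial j (partial i g) x) < e"
    unfolding eventually_at_right_field
  proof (intro exI[of _ "d / 2"] conjI allI impI)
    show "0 < d / 2" using \<open>0 < d\<close> by simp
    fix h :: real assume "0 < h" "h < d / 2"
    then obtain \<xi> \<eta> where "0 < \<xi>" "\<xi> < h" "0 < \<eta>" "\<eta> < h"
      and diff: "g (x + h *\<^sub>R axis i 1 + h *\<^sub>R axis j 1) - g (x + h *\<^sub>R axis i 1) - g (x + h *\<^sub>R axis j 1) + g x
        = h * h * partial j (partial i g) (x + \<xi> *\<^sub>R axis i 1 + \<eta> *\<^sub>R axis j 1)"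
      using second_difference_mean_value[OF g] by blast
    have "dist (x + \<xi> *\<^sub>R axis i 1 + \<eta> *\<^sub>R axis j 1) x = norm (\<xi> *\<^sub>R axis i (1::real) + \<eta> *\<^sub>R axis j 1)"
      by (simp add: dist_norm)
    also have "\<dots> \<le> norm (\<xi> *\<^sub>R axis i (1::real)) + norm (\<eta> *\<^sub>R axis j (1::real))"
      by (rule norm_triangle_ineq)
    also have "\<dots> < d"
      using \<open>0 < \<xi>\<close> \<open>\<xi> < h\<close> \<open>0 < \<eta>\<close> \<open>\<eta> < h\<close> \<open>h < d / 2\<close> by simp
    finally show "dist ((g (x + h *\<^sub>R axis i 1 + h *\<^sub>R axis j 1) - g (x + h *\<^sub>R axis i 1)
        - g (x + h *\<^sub>R axis j 1) + g x) / (h * h)) (partial j (partial i g) x) < e"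
      using d diff \<open>0 < h\<close> by simp
  qed
qed

text \<open>Schwarz's theorem: the second difference quotient is symmetric in \<open>i\<close> and \<open>j\<close>.\<close>

theorem partial_commute:
  fixes g :: "real^'n \<Rightarrow> real"
  assumes g: "C_k 2 g"
  shows "partial i (partial j g) x = partial j (partial i g) x"
proof (rule tendsto_unique[OF trivial_limit_at_right_real])
  show "((\<lambda>h. (g (x + h *\<^sub>R axis i 1 + h *\<^sub>R axis j 1) - g (x + h *\<^sub>R axis i 1)
      - g (x + h *\<^sub>R axis j 1) + g x) / (h * h)) \<longlongrightarrow> partial i (partial j g) x) (at_right 0)"
    using second_difference_quotient_tendsto[OF g, of x j i] by (simp add: algebra_simps)
qed (rule second_difference_quotient_tendsto[OF g])

lemma iter_partial_swap:
  assumes "C_k k g" and "length xs + length ys + 2 \<le> k"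
  shows "iter_partial (xs @ i # j # ys) g = iter_partial (xs @ j # i # ys) g"
proof -
  have "C_k 2 (iter_partial ys g)"
    using C_k_iter_partial[OF assms(1), of ys 2] assms(2) by simp
  then have "partial i (partial j (iter_partial ys g)) = partial j (partial i (iter_partial ys g))"
    by (intro ext partial_commute)
  then show ?thesis
    by (simp add: iter_partial_append)
qed

lemma iter_partial_move_front:
  assumes "C_k k g" and "length xs + length ys + length zs + 1 \<le> k"
  shows "iter_partial (xs @ ys @ a # zs) g = iter_partial (xs @ a # ys @ zs) g"
  using assms(2)
proof (induction ys arbitrary: xs)
  case Nil
  then show ?case by simp
next
  case (Cons y ys)
  have "iter_partial (xs @ (y # ys) @ a # zs) g = iter_partial ((xs @ [y]) @ ys @ a # zs) g"
    by simp
  also have "\<dots> = iter_partial (xs @ y # a # ys @ zs) g"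
    using Cons.IH[of "xs @ [y]"] Cons.prems by simp
  also have "\<dots> = iter_partial (xs @ a # y # ys @ zs) g"
    using iter_partial_swap[OF assms(1)] Cons.prems by simp
  finally show ?case by simp
qed

lemma iter_partial_mset_eq:
  assumes g: "C_k k g" and "mset xs = mset ys" and "length xs \<le> k"
  shows "iter_partial xs g = iter_partial ys g"
proof -
  have "iter_partial (pre @ xs) g = iter_partial (pre @ ys) g"
    if "mset xs = mset ys" and "length pre + length xs \<le> k" for pre xs ys
    using that
  proof (induction xs arbitrary: pre ys)
    case Nil
    then show ?case by simp
  next
    case (Cons x xs)
    then have "x \<in> set ys"
      by (metis list.set_intros(1) set_mset_mset)
    then obtain ys1 ys2 where ys: "ys = ys1 @ x # ys2"
      by (meson split_list)
    have "length ys = Suc (length xs)"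
      using Cons.prems(1) by (metis length_Cons mset_eq_length)
    from Cons.prems ys have "mset xs = mset (ys1 @ ys2)"
      by simp
    then have "iter_partial ((pre @ [x]) @ xs) g = iter_partial ((pre @ [x]) @ ys1 @ ys2) g"
      using Cons.IH[of "ys1 @ ys2" "pre @ [x]"] Cons.prems(2) by simp
    also have "\<dots> = iter_partial (pre @ ys1 @ x # ys2) g"
      using iter_partial_move_front[OF g, of pre ys1 ys2 x] Cons.prems(2) \<open>length ys = _\<close> ys by simp
    finally show ?case
      using ys by simp
  qed
  from this[of xs ys "[]"] assms show ?thesis
    by simp
qed

section \<open>Sums over multi-indices\<close>

definition len_lists :: "nat \<Rightarrow> 'a list set" where
  "len_lists k = {xs. length xs = k}"

lemma mem_len_lists [simp]: "xs \<in> len_lists k \<longleftrightarrow> length xs = k"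
  by (simp add: len_lists_def)

lemma finite_len_lists [simp]: "finite (len_lists k :: 'a::finite list set)"
  using finite_lists_length_eq[of "UNIV :: 'a set" k] by (simp add: len_lists_def)

lemma len_lists_0 [simp]: "len_lists 0 = {[]}"
  by (auto simp: len_lists_def)

definition insert_at :: "nat \<Rightarrow> 'a \<Rightarrow> 'a list \<Rightarrow> 'a list" where
  "insert_at t a xs = take t xs @ a # drop t xs"

definition delete_at :: "nat \<Rightarrow> 'a list \<Rightarrow> 'a list" where
  "delete_at t xs = take t xs @ drop (Suc t) xs"

lemma insert_at_0 [simp]: "insert_at 0 a xs = a # xs"
  by (simp add: insert_at_def)

lemma length_insert_at [simp]: "t \<le> length xs \<Longrightarrow> length (insert_at t a xs) = Suc (length xs)"
  by (simp add: insert_at_def)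

lemma nth_insert_at [simp]: "t \<le> length xs \<Longrightarrow> insert_at t a xs ! t = a"
  by (simp add: insert_at_def nth_append)

lemma delete_at_insert_at [simp]: "t \<le> length xs \<Longrightarrow> delete_at t (insert_at t a xs) = xs"
  by (simp add: insert_at_def delete_at_def)

lemma insert_at_delete_at: "t < length xs \<Longrightarrow> insert_at t (xs ! t) (delete_at t xs) = xs"
  by (simp add: insert_at_def delete_at_def id_take_nth_drop[symmetric] min_def)

lemma length_delete_at [simp]: "t < length xs \<Longrightarrow> length (delete_at t xs) = length xs - 1"
  by (simp add: delete_at_def)

lemma mset_insert_at [simp]: "mset (insert_at t a xs) = add_mset a (mset xs)"
  using mset_append[of "take t xs" "drop t xs"] by (simp add: insert_at_def)

lemma sum_len_lists_insert_at:
  assumes "t \<le> k"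
  shows "(\<Sum>xs\<in>len_lists (Suc k). F xs) = (\<Sum>a\<in>UNIV. \<Sum>xs\<in>len_lists k. F (insert_at t a xs))"
proof -
  have "(\<Sum>xs\<in>len_lists (Suc k). F xs) = (\<Sum>(a, xs)\<in>UNIV \<times> len_lists k. F (insert_at t a xs))"
    by (rule sum.reindex_bij_witness[where j = "\<lambda>xs. (xs ! t, delete_at t xs)"
          and i = "\<lambda>(a, xs). insert_at t a xs"])
      (use assms in \<open>auto simp: insert_at_delete_at\<close>)
  then show ?thesis
    by (simp add: sum.cartesian_product)
qed

lemma sum_len_lists_Suc:
  "(\<Sum>xs\<in>len_lists (Suc k). F xs) = (\<Sum>a\<in>UNIV. \<Sum>xs\<in>len_lists k. F (a # xs))"
  using sum_len_lists_insert_at[of 0 k F] by simp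

section \<open>Expansions in partial derivatives\<close>

lemma higher_deriv_line:
  fixes g :: "real^'n \<Rightarrow> real"
  assumes g: "C_k N g" and "k \<le> N"
  shows "(deriv ^^ k) (\<lambda>t. g (p + t *\<^sub>R y))
    = (\<lambda>t. \<Sum>is\<in>len_lists k. iter_partial is g (p + t *\<^sub>R y) * prod_list (map (($) y) is))"
  using \<open>k \<le> N\<close>
proof (induction k)
  case 0
  then show ?case by simp
next
  case (Suc k)
  have "((\<lambda>t. \<Sum>is\<in>len_lists k. iter_partial is g (p + t *\<^sub>R y) * prod_list (map (($) y) is))
      has_real_derivative
        (\<Sum>is\<in>len_lists k. (y \<bullet> grad (iter_partial is g) (p + t *\<^sub>R y)) * prod_list (map (($) y) is))) (at t)"
    for t
  proof (intro DERIV_sum DERIV_cmult_right has_real_derivative_line)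
    fix "is" :: "'n list" assume "is \<in> len_lists k"
    with Suc.prems show "C_k 1 (iter_partial is g)"
      by (intro C_k_iter_partial[OF g]) simp
  qed
  moreover have "(deriv ^^ Suc k) (\<lambda>t. g (p + t *\<^sub>R y))
      = deriv (\<lambda>t. \<Sum>is\<in>len_lists k. iter_partial is g (p + t *\<^sub>R y) * prod_list (map (($) y) is))"
    using Suc by simp
  ultimately have "(deriv ^^ Suc k) (\<lambda>t. g (p + t *\<^sub>R y))
      = (\<lambda>t. \<Sum>is\<in>len_lists k. (y \<bullet> grad (iter_partial is g) (p + t *\<^sub>R y)) * prod_list (map (($) y) is))"
    by (simp add: DERIV_imp_deriv fun_eq_iff)
  also have "\<dots> = (\<lambda>t. \<Sum>is\<in>len_lists k. \<Sum>i\<in>UNIV.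
      iter_partial (i # is) g (p + t *\<^sub>R y) * prod_list (map (($) y) (i # is)))"
    by (simp add: inner_vec_def grad_def sum_distrib_left sum_distrib_right mult_ac)
  also have "\<dots> = (\<lambda>t. \<Sum>is\<in>len_lists (Suc k). iter_partial is g (p + t *\<^sub>R y) * prod_list (map (($) y) is))"
    by (subst sum_len_lists_Suc, subst sum.swap) (rule refl)
  finally show ?case .
qed

lemma sum_iter_partial_taylor_term:
  fixes g :: "real^'n \<Rightarrow> real"
  assumes "C_k k g"
  shows "(\<Sum>is\<in>len_lists k. iter_partial is g p * prod_list (map (($) y) is)) = fact k * taylor_term k g p y"
  unfolding taylor_term_def higher_deriv_line[OF assms order_refl] by simp

lemma partial_sum:
  assumes "finite A" and "\<And>a. a \<in> A \<Longrightarrow> (\<lambda>t. g a (x + t *\<^sub>R axis i 1)) differentiable (at 0)"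
  shows "partial i (\<lambda>x. \<Sum>a\<in>A. c a * g a x) x = (\<Sum>a\<in>A. c a * partial i (g a) x)"
proof -
  have "((\<lambda>t. \<Sum>a\<in>A. c a * g a (x + t *\<^sub>R axis i 1)) has_real_derivative
      (\<Sum>a\<in>A. c a * deriv (\<lambda>t. g a (x + t *\<^sub>R axis i 1)) 0)) (at 0)"
    using assms by (intro DERIV_sum DERIV_cmult) (auto simp: DERIV_deriv_iff_real_differentiable)
  then show ?thesis
    by (simp add: partial_def DERIV_imp_deriv)
qed

text \<open>The coefficient \<open>Q\<^sub>i\<^sub>1\<^sub>i\<^sub>2 Q\<^sub>i\<^sub>3\<^sub>i\<^sub>4 \<dots>\<close> of \<open>\<partial>\<^sub>i\<^sub>1 \<dots> \<partial>\<^sub>i\<^sub>2\<^sub>k\<close> in \<open>(\<nabla>\<^sup>T Q \<nabla>)\<^sup>k\<close>.\<close>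

fun pair_prod :: "real^'n^'n \<Rightarrow> 'n list \<Rightarrow> real" where
  "pair_prod Q (i # j # is) = Q $ i $ j * pair_prod Q is"
| "pair_prod Q _ = 1"

lemma quad_op_power:
  fixes g :: "real^'n \<Rightarrow> real"
  assumes g: "C_k (2 * k) g"
  shows "(quad_op Q ^^ k) g = (\<lambda>x. \<Sum>is\<in>len_lists (2 * k). pair_prod Q is * iter_partial is g x)"
  using g
proof (induction k)
  case 0
  then show ?case by simp
next
  case (Suc k)
  have IH: "(quad_op Q ^^ k) g = (\<lambda>x. \<Sum>is\<in>len_lists (2 * k). pair_prod Q is * iter_partial is g x)"
    using Suc by (simp add: C_k_mono)
  have "partial i (partial j (\<lambda>x. \<Sum>is\<in>len_lists (2 * k). pair_prod Q is * iter_partial is g x)) x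
      = (\<Sum>is\<in>len_lists (2 * k). pair_prod Q is * iter_partial (i # j # is) g x)" for i j x
  proof -
    have "partial j (\<lambda>x. \<Sum>is\<in>len_lists (2 * k). pair_prod Q is * iter_partial is g x)
        = (\<lambda>x. \<Sum>is\<in>len_lists (2 * k). pair_prod Q is * iter_partial (j # is) g x)"
      using Suc.prems by (auto intro!: partial_sum C_k_differentiable_iter_partial)
    moreover have "(\<lambda>t. partial j (iter_partial is g) (x + t *\<^sub>R axis i 1)) differentiable (at 0)"
      if "length is = 2 * k" for "is"
      using C_k_differentiable_iter_partial[OF Suc.prems, of "j # is"] that by simp
    ultimately show ?thesis
      by (auto intro!: partial_sum)
  qed
  then have "(quad_op Q ^^ Suc k) g x
      = (\<Sum>i\<in>UNIV. \<Sum>j\<in>UNIV. \<Sum>is\<in>len_lists (2 * k). pair_prod Q (i # j # is) * iter_partial (i # j # is) g x)"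
    for x
    by (simp add: IH quad_op_def sum_distrib_left mult.assoc)
  then show ?case
    by (simp add: sum_len_lists_Suc fun_eq_iff)
qed

lemma grad_quad_op_power:
  fixes g :: "real^'n \<Rightarrow> real"
  assumes g: "C_k (2 * k + 1) g"
  shows "grad ((quad_op Q ^^ k) g) x $ l = (\<Sum>is\<in>len_lists (2 * k). pair_prod Q is * iter_partial (l # is) g x)"
  using g by (auto simp: quad_op_power C_k_mono grad_def intro!: partial_sum C_k_differentiable_iter_partial)

section \<open>Factorization of positive semidefinite matrices\<close>

lemma quadratic_nonneg_imp_discriminant:
  fixes a b c :: real
  assumes "0 \<le> a" and nonneg: "\<And>t. 0 \<le> a * t\<^sup>2 + 2 * b * t + c"
  shows "b\<^sup>2 \<le> a * c"
proof (cases "a = 0")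
  case True
  have "b = 0"
  proof (rule ccontr)
    assume "b \<noteq> 0"
    with True nonneg[of "- (c + 1) / (2 * b)"] show False
      by (simp add: field_simps)
  qed
  with True show ?thesis by simp
next
  case False
  with \<open>0 \<le> a\<close> have "0 < a" by simp
  with nonneg[of "- b / a"] show ?thesis
    by (simp add: field_simps power2_eq_square)
qed

lemma inner_matrix_vector_symmetric:
  fixes Q :: "real^'n^'n"
  assumes "transpose Q = Q"
  shows "y \<bullet> (Q *v x) = x \<bullet> (Q *v y)"
  by (metis assms dot_lmul_matrix inner_commute transpose_matrix_vector)

lemma psd_cauchy_schwarz:
  fixes Q :: "real^'n^'n"
  assumes sym: "transpose Q = Q" and psd: "\<And>y. 0 \<le> y \<bullet> (Q *v y)"
  shows "(x \<bullet> (Q *v y))\<^sup>2 \<le> (y \<bullet> (Q *v y)) * (x \<bullet> (Q *v x))"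
proof (rule quadratic_nonneg_imp_discriminant[OF psd])
  fix t
  have "0 \<le> (x + t *\<^sub>R y) \<bullet> (Q *v (x + t *\<^sub>R y))"
    by (rule psd)
  also have "\<dots> = (y \<bullet> (Q *v y)) * t\<^sup>2 + 2 * (x \<bullet> (Q *v y)) * t + x \<bullet> (Q *v x)"
    using inner_matrix_vector_symmetric[OF sym, of y x]
    by (simp add: algebra_simps inner_add_left power2_eq_square)
  finally show "0 \<le> (y \<bullet> (Q *v y)) * t\<^sup>2 + 2 * (x \<bullet> (Q *v y)) * t + x \<bullet> (Q *v x)" .
qed

lemma psd_row_bound:
  fixes Q :: "real^'n^'n"
  assumes sym: "transpose Q = Q" and psd: "\<And>y. 0 \<le> y \<bullet> (Q *v y)"
  shows "((Q *v y) $ k)\<^sup>2 \<le> Q $ k $ k * (y \<bullet> (Q *v y))"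
proof -
  have row: "z \<bullet> (Q *v axis k 1) = (Q *v z) $ k" for z
    using inner_matrix_vector_symmetric[OF sym, of z "axis k 1"] by (simp add: inner_axis')
  have diag: "(Q *v axis k 1) $ k = Q $ k $ k"
    by (simp add: matrix_vector_mul_component inner_axis)
  show ?thesis
    using psd_cauchy_schwarz[OF sym psd, of y "axis k 1"] unfolding row diag .
qed

lemma psd_diag_eq_0_imp_row_eq_0:
  fixes Q :: "real^'n^'n"
  assumes sym: "transpose Q = Q" and psd: "\<And>y. 0 \<le> y \<bullet> (Q *v y)" and "Q $ k $ k = 0"
  shows "Q $ k $ j = 0"
  using psd_row_bound[OF sym psd, of "axis j 1" k] assms(3)
  by (simp add: matrix_vector_mul_component inner_axis)

lemma psd_rank_one_deflation:
  fixes Q :: "real^'n^'n"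
  assumes sym: "transpose Q = Q" and psd: "\<And>y. 0 \<le> y \<bullet> (Q *v y)" and "0 < Q $ k $ k"
    and v: "v = (\<chi> i. Q $ i $ k / sqrt (Q $ k $ k))"
  shows "transpose (Q - (\<chi> i j. v $ i * v $ j)) = Q - (\<chi> i j. v $ i * v $ j)"
    and "0 \<le> y \<bullet> ((Q - (\<chi> i j. v $ i * v $ j)) *v y)"
    and "(Q - (\<chi> i j. v $ i * v $ j)) $ k $ j = 0"
proof -
  have Q_sym: "Q $ i $ j = Q $ j $ i" for i j
    using sym by (metis transpose_def vec_lambda_beta)
  show "transpose (Q - (\<chi> i j. v $ i * v $ j)) = Q - (\<chi> i j. v $ i * v $ j)"
    using sym by (simp add: transpose_def vec_eq_iff mult.commute)
  have "y \<bullet> v = (Q *v y) $ k / sqrt (Q $ k $ k)"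
    using sym by (simp add: v inner_vec_def matrix_vector_mult_def sum_divide_distrib
        transpose_def vec_eq_iff mult.commute)
  moreover have "y \<bullet> ((\<chi> i j. v $ i * v $ j) *v y) = (y \<bullet> v)\<^sup>2"
    by (simp add: inner_vec_def matrix_vector_mult_def sum_distrib_left sum_distrib_right
        power2_eq_square mult_ac)
  ultimately have "y \<bullet> ((Q - (\<chi> i j. v $ i * v $ j)) *v y) = y \<bullet> (Q *v y) - ((Q *v y) $ k)\<^sup>2 / Q $ k $ k"
    using \<open>0 < Q $ k $ k\<close>
    by (simp add: matrix_vector_mult_diff_rdistrib inner_diff_right power_divide)
  then show "0 \<le> y \<bullet> ((Q - (\<chi> i j. v $ i * v $ j)) *v y)"
    using psd_row_bound[OF sym psd, of y k] \<open>0 < Q $ k $ k\<close> by (simp add: pos_divide_le_eq mult.commute)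
  show "(Q - (\<chi> i j. v $ i * v $ j)) $ k $ j = 0"
    using \<open>0 < Q $ k $ k\<close> Q_sym[of j k] by (simp add: v)
qed

lemma matrix_mult_transpose_add_column:
  fixes M :: "real^'n^'n" and v :: "real^'n"
  assumes "\<forall>i. M $ i $ k = 0"
  shows "(\<chi> i l. if l = k then v $ i else M $ i $ l) ** transpose (\<chi> i l. if l = k then v $ i else M $ i $ l)
    = M ** transpose M + (\<chi> i j. v $ i * v $ j)"
proof -
  have "((\<chi> i l. if l = k then v $ i else M $ i $ l) ** transpose (\<chi> i l. if l = k then v $ i else M $ i $ l)) $ i $ j
      = v $ i * v $ j + (\<Sum>l\<in>UNIV - {k}. M $ i $ l * M $ j $ l)" for i j
    by (simp add: matrix_matrix_mult_def transpose_def sum.remove[of UNIV k])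
  moreover have "(M ** transpose M) $ i $ j = (\<Sum>l\<in>UNIV - {k}. M $ i $ l * M $ j $ l)" for i j
    using assms by (simp add: matrix_matrix_mult_def transpose_def sum.remove[of UNIV k])
  ultimately show ?thesis
    by (simp add: vec_eq_iff)
qed

text \<open>The support condition is only the induction invariant; \<open>S = UNIV\<close> gives the Cholesky
  factorization.\<close>

lemma psd_factor_supported:
  fixes Q :: "real^'n^'n"
  assumes "finite S" and "transpose Q = Q" and "\<And>y. 0 \<le> y \<bullet> (Q *v y)"
    and "\<And>i j. i \<notin> S \<Longrightarrow> Q $ i $ j = 0"
  shows "\<exists>M. Q = M ** transpose M \<and> (\<forall>i l. l \<notin> S \<longrightarrow> M $ i $ l = 0)"
  using assms
proof (induction S arbitrary: Q)
  case empty
  then have "Q = 0" by (simp add: vec_eq_iff)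
  then show ?case by (intro exI[of _ 0]) simp
next
  case (insert k S)
  note sym = insert.prems(1) and psd = insert.prems(2) and supp = insert.prems(3)
  show ?case
  proof (cases "Q $ k $ k = 0")
    case True
    have "Q $ i $ j = 0" if "i \<notin> S" for i j
      using supp[of i j] psd_diag_eq_0_imp_row_eq_0[OF sym psd True, of j] that by (cases "i = k") auto
    with insert.IH sym psd obtain M where "Q = M ** transpose M" "\<forall>i l. l \<notin> S \<longrightarrow> M $ i $ l = 0"
      by blast
    then show ?thesis by auto
  next
    case False
    moreover have "0 \<le> Q $ k $ k"
      using psd[of "axis k 1"] by (simp add: inner_axis' matrix_vector_mul_component inner_axis)
    ultimately have "0 < Q $ k $ k" by simp
    define v where "v = (\<chi> i. Q $ i $ k / sqrt (Q $ k $ k))"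
    define Q' where "Q' = Q - (\<chi> i j. v $ i * v $ j)"
    note deflation = psd_rank_one_deflation[OF sym psd \<open>0 < Q $ k $ k\<close> v_def, folded Q'_def]
    have "Q' $ i $ j = 0" if "i \<notin> S" for i j
      using deflation(3)[of j] supp[of i j] supp[of i k] that
      by (cases "i = k") (simp_all add: Q'_def v_def)
    from insert.IH[OF deflation(1,2) this]
    obtain M' where M': "Q' = M' ** transpose M'" and M'_supp: "\<forall>i l. l \<notin> S \<longrightarrow> M' $ i $ l = 0"
      by blast
    define M where "M = (\<chi> i l. if l = k then v $ i else M' $ i $ l)"
    have "Q = M ** transpose M"
      using matrix_mult_transpose_add_column[of M' k v] M'_supp insert.hyps
      by (simp add: M_def M' [symmetric] Q'_def)
    moreover have "\<forall>i l. l \<notin> insert k S \<longrightarrow> M $ i $ l = 0"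
      using M'_supp by (simp add: M_def)
    ultimately show ?thesis
      by blast
  qed
qed

lemma pos_def_mat_factor:
  fixes Q :: "real^'n^'n"
  assumes "pos_def_mat Q"
  obtains M :: "real^'n^'n" where "Q = M ** transpose M"
proof -
  have psd: "0 \<le> y \<bullet> (Q *v y)" for y
    using assms by (cases "y = 0") (auto simp: pos_def_mat_def less_imp_le)
  have "\<exists>M. Q = M ** transpose M \<and> (\<forall>i l. l \<notin> (UNIV :: 'n set) \<longrightarrow> M $ i $ l = 0)"
    by (rule psd_factor_supported) (use assms psd in \<open>simp_all add: pos_def_mat_def\<close>)
  then show ?thesis
    by (elim exE conjE) (rule that)
qed

section \<open>Moments of Gaussian vectors\<close>

abbreviation std_gaussian :: "('n::finite \<Rightarrow> real) measure" where
  "std_gaussian \<equiv> PiM UNIV (\<lambda>_. std_normal_distribution)"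

lemma prob_space_std_normal_distribution: "prob_space std_normal_distribution"
  using real_dist_normal_dist by (simp add: real_distribution_def)

lemma prob_space_std_gaussian: "prob_space std_gaussian"
  by (intro prob_space_PiM prob_space_std_normal_distribution)

lemma product_sigma_finite_std_normal: "product_sigma_finite (\<lambda>_. std_normal_distribution)"
  unfolding product_sigma_finite_def
  using prob_space_imp_sigma_finite[OF prob_space_std_normal_distribution] by simp

definition normal_moment :: "nat \<Rightarrow> real" where
  "normal_moment r = (\<integral>x. x ^ r \<partial>std_normal_distribution)"

lemma normal_moment_even: "normal_moment (2 * k) = fact (2 * k) / (2 ^ k * fact k)"
  using std_normal_distribution_even_moments(1)[of k] by (simp add: normal_moment_def)

lemma normal_moment_odd: "odd r \<Longrightarrow> normal_moment r = 0"
  using integral_std_normal_distribution_moment_odd by (simp add: normal_moment_def)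

lemma normal_moment_0 [simp]: "normal_moment 0 = 1"
  using normal_moment_even[of 0] by simp

lemma normal_moment_Suc_Suc: "normal_moment (Suc (Suc r)) = real (Suc r) * normal_moment r"
proof (cases "even r")
  case True
  then obtain k where r: "r = 2 * k" by (elim evenE)
  have "Suc (Suc r) = 2 * Suc k" by (simp add: r)
  then have "normal_moment (Suc (Suc r)) = fact (Suc (Suc (2 * k))) / (2 ^ Suc k * fact (Suc k))"
    using normal_moment_even[of "Suc k"] by simp
  also have "\<dots> = (2 * real k + 2) * ((2 * real k + 1) * fact (2 * k)) / ((2 * real k + 2) * (2 ^ k * fact k))"
    by (simp only: fact_Suc power_Suc) (simp add: algebra_simps)
  also have "\<dots> = real (Suc r) * (fact (2 * k) / (2 ^ k * fact k))"
    by (subst nonzero_mult_divide_mult_cancel_left) (simp_all add: r)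
  finally show ?thesis
    by (simp add: r normal_moment_even)
next
  case False
  then show ?thesis by (simp add: normal_moment_odd)
qed

definition std_moment :: "'n::finite list \<Rightarrow> real" where
  "std_moment ks = (\<integral>x. prod_list (map x ks) \<partial>std_gaussian)"

lemma prod_list_map_eq_prod_count:
  fixes x :: "'n::finite \<Rightarrow> 'a::comm_monoid_mult"
  shows "prod_list (map x ks) = (\<Prod>k\<in>UNIV. x k ^ count (mset ks) k)"
proof (induction ks)
  case Nil
  then show ?case by simp
next
  case (Cons k ks)
  have "(\<Prod>k'\<in>UNIV. x k' ^ count (mset (k # ks)) k')
      = (\<Prod>k'\<in>UNIV. (if k' = k then x k' else 1) * x k' ^ count (mset ks) k')"
    by (intro prod.cong) auto
  also have "\<dots> = x k * (\<Prod>k'\<in>UNIV. x k' ^ count (mset ks) k')"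
    by (simp add: prod.distrib prod.delta)
  finally show ?case
    using Cons by simp
qed

lemma integrable_std_moment: "integrable std_gaussian (\<lambda>x. prod_list (map x ks))"
  unfolding prod_list_map_eq_prod_count
  by (rule product_sigma_finite.product_integrable_prod[OF product_sigma_finite_std_normal])
    (simp_all add: integrable_std_normal_distribution_moment)

lemma std_moment_eq_prod: "std_moment ks = (\<Prod>k\<in>UNIV. normal_moment (count (mset ks) k))"
  unfolding std_moment_def prod_list_map_eq_prod_count normal_moment_def
  by (rule product_sigma_finite.product_integral_prod[OF product_sigma_finite_std_normal])
    (simp_all add: integrable_std_normal_distribution_moment)

lemma std_moment_split:
  "std_moment ks = normal_moment (count (mset ks) k) * (\<Prod>k'\<in>UNIV - {k}. normal_moment (count (mset ks) k'))"
  unfolding std_moment_eq_prod by (rule prod.remove) simp_all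

lemma mset_delete_at: "t < length ks \<Longrightarrow> mset (delete_at t ks) = mset ks - {#ks ! t#}"
  using mset_insert_at[of t "ks ! t" "delete_at t ks"] by (simp add: insert_at_delete_at)

text \<open>Gaussian integration by parts \<open>E[X\<^sub>k F(X)] = E[\<partial>\<^sub>k F(X)]\<close> for a monomial \<open>F\<close>; via
  \<open>normal_moment_Suc_Suc\<close> it reduces to counting the occurrences of \<open>k\<close> in \<open>ks\<close>.\<close>

lemma std_moment_Cons:
  "std_moment (k # ks) = (\<Sum>t<length ks. if ks ! t = k then std_moment (delete_at t ks) else 0)"
proof -
  define c where "c = count (mset ks) k"
  define P where "P = (\<Prod>k'\<in>UNIV - {k}. normal_moment (count (mset ks) k'))"
  have lhs: "std_moment (k # ks) = normal_moment (Suc c) * P"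
    unfolding std_moment_split[of _ k] P_def c_def by (auto intro!: prod.cong)
  have "std_moment (delete_at t ks) = normal_moment (c - 1) * P" if "t < length ks" "ks ! t = k" for t
    unfolding std_moment_split[of _ k] P_def c_def using that by (auto simp: mset_delete_at intro!: prod.cong)
  then have "(\<Sum>t<length ks. if ks ! t = k then std_moment (delete_at t ks) else 0)
      = (\<Sum>t\<in>{t. t < length ks \<and> ks ! t = k}. normal_moment (c - 1) * P)"
    by (simp add: sum.inter_filter[symmetric] Collect_conj_eq lessThan_def Int_commute)
  also have "\<dots> = real (card {t. t < length ks \<and> ks ! t = k}) * (normal_moment (c - 1) * P)"
    by simp
  also have "card {t. t < length ks \<and> ks ! t = k} = c"
    unfolding c_def count_mset count_list_eq_length_filter length_filter_conv_card
    by (metis (mono_tags))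
  finally show ?thesis
    using lhs by (cases c) (simp_all add: normal_moment_Suc_Suc normal_moment_odd)
qed

text \<open>\<open>gauss_moment M is\<close> is the moment \<open>E[Z\<^sub>i\<^sub>1 \<cdots> Z\<^sub>i\<^sub>k]\<close> of the centred Gaussian vector
  \<open>Z = M X\<close> with covariance \<open>M M\<^sup>T\<close>, where \<open>X\<close> is standard normal.\<close>

definition gauss_moment :: "real^'n^'n \<Rightarrow> 'n list \<Rightarrow> real" where
  "gauss_moment M is = (\<integral>x. prod_list (map (($) (M *v vec_lambda x)) is) \<partial>std_gaussian)"

lemma prod_list_matrix_vector_mult:
  fixes M :: "'a::comm_semiring_1^'n^'m"
  shows "prod_list (map (($) (M *v v)) is)
    = (\<Sum>ks\<in>len_lists (length is). prod_list (map2 (\<lambda>i k. M $ i $ k) is ks) * prod_list (map (($) v) ks))"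
proof (induction "is")
  case Nil
  then show ?case by simp
next
  case (Cons i "is")
  have "(M *v v) $ i = (\<Sum>k\<in>UNIV. M $ i $ k * v $ k)"
    by (simp add: matrix_vector_mult_def)
  then have "prod_list (map (($) (M *v v)) (i # is))
      = (\<Sum>k\<in>UNIV. M $ i $ k * v $ k) * (\<Sum>ks\<in>len_lists (length is).
          prod_list (map2 (\<lambda>i k. M $ i $ k) is ks) * prod_list (map (($) v) ks))"
    using Cons by simp
  also have "\<dots> = (\<Sum>k\<in>UNIV. \<Sum>ks\<in>len_lists (length is).
      prod_list (map2 (\<lambda>i k. M $ i $ k) (i # is) (k # ks)) * prod_list (map (($) v) (k # ks)))"
    unfolding sum_product by (intro sum.cong refl) (simp add: mult_ac)
  finally show ?case
    by (simp add: sum_len_lists_Suc)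
qed

lemma has_bochner_integral_gauss_monomial:
  "has_bochner_integral std_gaussian (\<lambda>x. prod_list (map (($) (M *v vec_lambda x)) is))
    (\<Sum>ks\<in>len_lists (length is). prod_list (map2 (\<lambda>i k. M $ i $ k) is ks) * std_moment ks)"
  unfolding prod_list_matrix_vector_mult
  by (intro has_bochner_integral_sum has_bochner_integral_mult_right)
    (simp add: std_moment_def integrable_std_moment has_bochner_integral_iff vec_lambda_inverse)

lemma gauss_moment_expand:
  "gauss_moment M is = (\<Sum>ks\<in>len_lists (length is). prod_list (map2 (\<lambda>i k. M $ i $ k) is ks) * std_moment ks)"
  unfolding gauss_moment_def
  using has_bochner_integral_gauss_monomial by (rule has_bochner_integral_integral_eq)

lemma has_bochner_integral_gauss_moment:
  "has_bochner_integral std_gaussian (\<lambda>x. prod_list (map (($) (M *v vec_lambda x)) is)) (gauss_moment M is)"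
  unfolding gauss_moment_expand by (rule has_bochner_integral_gauss_monomial)

lemma gauss_moment_Nil [simp]: "gauss_moment M [] = 1"
  using prob_space.prob_space[OF prob_space_std_gaussian] by (simp add: gauss_moment_def)

lemma prod_list_map2_insert_at:
  fixes f :: "'a \<Rightarrow> 'b \<Rightarrow> 'c::comm_monoid_mult"
  assumes "length xs = length ys" and "t \<le> length xs"
  shows "prod_list (map2 f (insert_at t a xs) (insert_at t b ys)) = f a b * prod_list (map2 f xs ys)"
proof -
  have "zip (insert_at t a xs) (insert_at t b ys) = zip (take t xs) (take t ys) @ (a, b) # zip (drop t xs) (drop t ys)"
    using assms by (simp add: insert_at_def zip_append)
  moreover have "zip xs ys = zip (take t xs) (take t ys) @ zip (drop t xs) (drop t ys)"
    using assms by (metis append_take_drop_id length_take zip_append)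
  ultimately show ?thesis
    by (simp add: mult_ac)
qed

lemma sum_std_moment_Cons:
  "(\<Sum>k\<in>UNIV. c k * std_moment (k # ks)) = (\<Sum>t<length ks. c (ks ! t) * std_moment (delete_at t ks))"
proof -
  have "(\<Sum>k\<in>UNIV. c k * std_moment (k # ks))
      = (\<Sum>k\<in>UNIV. \<Sum>t<length ks. if ks ! t = k then c k * std_moment (delete_at t ks) else 0)"
    by (simp add: std_moment_Cons sum_distrib_left if_distrib cong: if_cong)
  also have "\<dots> = (\<Sum>t<length ks. \<Sum>k\<in>UNIV. if ks ! t = k then c k * std_moment (delete_at t ks) else 0)"
    by (rule sum.swap)
  finally show ?thesis
    by (simp add: sum.delta)
qed

text \<open>Isserlis' theorem, in recursive form.\<close>

theorem gauss_moment_Cons: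
  "gauss_moment M (i # is) = (\<Sum>t<length is. (M ** transpose M) $ i $ (is ! t) * gauss_moment M (delete_at t is))"
proof -
  let ?P = "\<lambda>is ks. prod_list (map2 (\<lambda>i k. M $ i $ k) is ks)"
  have "gauss_moment M (i # is)
      = (\<Sum>ks\<in>len_lists (length is). \<Sum>k\<in>UNIV. (M $ i $ k * ?P is ks) * std_moment (k # ks))"
    by (simp add: gauss_moment_expand sum_len_lists_Suc mult.assoc) (rule sum.swap)
  also have "\<dots> = (\<Sum>t<length is. \<Sum>ks\<in>len_lists (length is). M $ i $ (ks ! t) * ?P is ks * std_moment (delete_at t ks))"
    by (simp add: sum_std_moment_Cons) (rule sum.swap)
  also have "\<dots> = (\<Sum>t<length is. (M ** transpose M) $ i $ (is ! t) * gauss_moment M (delete_at t is))"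
  proof (rule sum.cong[OF refl])
    fix t assume "t \<in> {..<length is}"
    then obtain n where n: "length is = Suc n" and "t \<le> n"
      by (cases "length is") auto
    have P_insert: "?P is (insert_at t k ks) = M $ (is ! t) $ k * ?P (delete_at t is) ks"
      if "length ks = n" for k ks
      using prod_list_map2_insert_at[of "delete_at t is" ks t "\<lambda>i k. M $ i $ k" "is ! t" k]
        that \<open>t \<le> n\<close> n by (simp add: insert_at_delete_at)
    have "(\<Sum>ks\<in>len_lists (length is). M $ i $ (ks ! t) * ?P is ks * std_moment (delete_at t ks))
        = (\<Sum>k\<in>UNIV. \<Sum>ks\<in>len_lists n. M $ i $ k * (M $ (is ! t) $ k * ?P (delete_at t is) ks) * std_moment ks)"
      unfolding n sum_len_lists_insert_at[OF \<open>t \<le> n\<close>]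
      using \<open>t \<le> n\<close> by (intro sum.cong refl) (simp add: P_insert)
    also have "\<dots> = (\<Sum>k\<in>UNIV. M $ i $ k * M $ (is ! t) $ k) * (\<Sum>ks\<in>len_lists n. ?P (delete_at t is) ks * std_moment ks)"
      unfolding sum_product by (intro sum.cong refl) (simp add: mult_ac)
    also have "\<dots> = (M ** transpose M) $ i $ (is ! t) * gauss_moment M (delete_at t is)"
      using \<open>t \<le> n\<close> n by (simp add: gauss_moment_expand matrix_matrix_mult_def transpose_def)
    finally show "(\<Sum>ks\<in>len_lists (length is). M $ i $ (ks ! t) * ?P is ks * std_moment (delete_at t ks))
        = (M ** transpose M) $ i $ (is ! t) * gauss_moment M (delete_at t is)" .
  qed
  finally show ?thesis .
qed

lemma gauss_moment_pair: "gauss_moment M [i, j] = (M ** transpose M) $ i $ j"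
  by (simp add: gauss_moment_Cons delete_at_def)

lemma sum_gauss_moment_Cons:
  fixes F :: "'n::finite list \<Rightarrow> real"
  assumes F_sym: "\<And>xs ys. mset xs = mset ys \<Longrightarrow> length xs = Suc L \<Longrightarrow> F xs = F ys"
  shows "(\<Sum>is\<in>len_lists (Suc L). gauss_moment M (i # is) * F is)
    = real (Suc L) * (\<Sum>j\<in>UNIV. (M ** transpose M) $ i $ j * (\<Sum>js\<in>len_lists L. gauss_moment M js * F (j # js)))"
proof -
  let ?Q = "M ** transpose M"
  have "(\<Sum>is\<in>len_lists (Suc L). gauss_moment M (i # is) * F is)
      = (\<Sum>is\<in>len_lists (Suc L). \<Sum>t<Suc L. ?Q $ i $ (is ! t) * gauss_moment M (delete_at t is) * F is)"
    by (intro sum.cong refl) (simp add: gauss_moment_Cons sum_distrib_right del: sum.lessThan_Suc)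
  also have "\<dots> = (\<Sum>t<Suc L. \<Sum>is\<in>len_lists (Suc L). ?Q $ i $ (is ! t) * gauss_moment M (delete_at t is) * F is)"
    by (rule sum.swap)
  also have "\<dots> = (\<Sum>t<Suc L. \<Sum>j\<in>UNIV. ?Q $ i $ j * (\<Sum>js\<in>len_lists L. gauss_moment M js * F (j # js)))"
  proof (intro sum.cong refl)
    fix t assume "t \<in> {..<Suc L}"
    then have "t \<le> L" by simp
    have F_insert: "F (insert_at t j js) = F (j # js)" if "length js = L" for j js
      using that \<open>t \<le> L\<close> by (intro F_sym) simp_all
    show "(\<Sum>is\<in>len_lists (Suc L). ?Q $ i $ (is ! t) * gauss_moment M (delete_at t is) * F is)
        = (\<Sum>j\<in>UNIV. ?Q $ i $ j * (\<Sum>js\<in>len_lists L. gauss_moment M js * F (j # js)))"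
      unfolding sum_len_lists_insert_at[OF \<open>t \<le> L\<close>] sum_distrib_left
      by (intro sum.cong refl) (simp add: \<open>t \<le> L\<close> F_insert mult.assoc)
  qed
  finally show ?thesis
    by simp
qed

text \<open>Here \<open>normal_moment (2 * k) = (2k - 1)!!\<close> counts the pairings of \<open>2k\<close> indices.\<close>

theorem sum_gauss_moment_contraction:
  fixes D :: "'n::finite list \<Rightarrow> real"
  assumes D_sym: "\<And>xs ys. mset xs = mset ys \<Longrightarrow> length xs = N \<Longrightarrow> D xs = D ys"
    and "length pre + 2 * k = N"
  shows "(\<Sum>js\<in>len_lists (2 * k). gauss_moment M js * D (pre @ js))
    = normal_moment (2 * k) * (\<Sum>js\<in>len_lists (2 * k). pair_prod (M ** transpose M) js * D (pre @ js))"
  using assms(2)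
proof (induction k arbitrary: pre)
  case 0
  then show ?case by (simp add: normal_moment_even)
next
  case (Suc k)
  let ?Q = "M ** transpose M"
  have two_Suc: "2 * Suc k = Suc (Suc (2 * k))" by simp
  have "(\<Sum>js\<in>len_lists (2 * Suc k). gauss_moment M js * D (pre @ js))
      = (\<Sum>i\<in>UNIV. \<Sum>is\<in>len_lists (Suc (2 * k)). gauss_moment M (i # is) * D (pre @ i # is))"
    unfolding two_Suc sum_len_lists_Suc[where k = "Suc (2 * k)"] by simp
  also have "\<dots> = (\<Sum>i\<in>UNIV. real (Suc (2 * k)) * (\<Sum>j\<in>UNIV. ?Q $ i $ j *
      (\<Sum>js\<in>len_lists (2 * k). gauss_moment M js * D ((pre @ [i, j]) @ js))))"
  proof (intro sum.cong refl)
    fix i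
    have "D (pre @ i # xs) = D (pre @ i # ys)" if "mset xs = mset ys" "length xs = Suc (2 * k)" for xs ys
      using that Suc.prems by (intro D_sym) auto
    then show "(\<Sum>is\<in>len_lists (Suc (2 * k)). gauss_moment M (i # is) * D (pre @ i # is))
        = real (Suc (2 * k)) * (\<Sum>j\<in>UNIV. ?Q $ i $ j *
          (\<Sum>js\<in>len_lists (2 * k). gauss_moment M js * D ((pre @ [i, j]) @ js)))"
      by (subst sum_gauss_moment_Cons) simp_all
  qed
  also have "\<dots> = (\<Sum>i\<in>UNIV. real (Suc (2 * k)) * (\<Sum>j\<in>UNIV. ?Q $ i $ j *
      (normal_moment (2 * k) * (\<Sum>js\<in>len_lists (2 * k). pair_prod ?Q js * D ((pre @ [i, j]) @ js)))))"
    using Suc.IH[of "pre @ [_, _]"] Suc.prems by simp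
  also have "\<dots> = normal_moment (2 * Suc k) *
      (\<Sum>i\<in>UNIV. \<Sum>j\<in>UNIV. \<Sum>js\<in>len_lists (2 * k). pair_prod ?Q (i # j # js) * D (pre @ i # j # js))"
    unfolding two_Suc normal_moment_Suc_Suc by (simp add: sum_distrib_left mult_ac)
  also have "\<dots> = normal_moment (2 * Suc k) * (\<Sum>js\<in>len_lists (2 * Suc k). pair_prod ?Q js * D (pre @ js))"
    unfolding two_Suc sum_len_lists_Suc by simp
  finally show ?case .
qed

section \<open>Gaussian integration of the Taylor polynomial\<close>

lemma sum_iter_partial_gauss_moment:
  fixes g :: "real^'n \<Rightarrow> real"
  assumes g: "C_k (2 * m + 1) g"
  shows "(\<Sum>is\<in>len_lists (2 * m + 1). iter_partial is g x * gauss_moment M (l # is))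
    = real (2 * m + 1) * normal_moment (2 * m) *
      ((M ** transpose M) *v grad ((quad_op (M ** transpose M) ^^ m) g) x) $ l"
proof -
  let ?Q = "M ** transpose M" and ?D = "\<lambda>is. iter_partial is g x"
  have D_sym: "?D xs = ?D ys" if "mset xs = mset ys" "length xs = 2 * m + 1" for xs ys
    using iter_partial_mset_eq[OF g that(1)] that(2) by simp
  have "(\<Sum>is\<in>len_lists (2 * m + 1). ?D is * gauss_moment M (l # is))
      = (\<Sum>is\<in>len_lists (Suc (2 * m)). gauss_moment M (l # is) * ?D is)"
    by (simp add: mult.commute)
  also have "\<dots> = real (Suc (2 * m)) * (\<Sum>j\<in>UNIV. ?Q $ l $ j *
      (\<Sum>js\<in>len_lists (2 * m). gauss_moment M js * ?D (j # js)))"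
    by (rule sum_gauss_moment_Cons) (use D_sym in simp)
  also have "\<dots> = real (Suc (2 * m)) * (\<Sum>j\<in>UNIV. ?Q $ l $ j *
      (normal_moment (2 * m) * (\<Sum>js\<in>len_lists (2 * m). pair_prod ?Q js * ?D (j # js))))"
  proof -
    have "(\<Sum>js\<in>len_lists (2 * m). gauss_moment M js * ?D ([j] @ js))
        = normal_moment (2 * m) * (\<Sum>js\<in>len_lists (2 * m). pair_prod ?Q js * ?D ([j] @ js))" for j
      by (rule sum_gauss_moment_contraction[OF D_sym]) simp_all
    then show ?thesis
      by simp
  qed
  also have "\<dots> = real (2 * m + 1) * normal_moment (2 * m) * (?Q *v grad ((quad_op ?Q ^^ m) g) x) $ l"
    by (simp add: grad_quad_op_power[OF g] matrix_vector_mult_def sum_distrib_left mult_ac)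
  finally show ?thesis .
qed

lemma sum_inner_iter_partial_gauss_moment:
  fixes g :: "real^'n \<Rightarrow> real"
  assumes "C_k (2 * m + 1) g"
  shows "(\<Sum>l\<in>UNIV. a $ l * (\<Sum>is\<in>len_lists (2 * m + 1). iter_partial is g x * gauss_moment M (l # is)))
    = real (2 * m + 1) * normal_moment (2 * m) *
      (a \<bullet> ((M ** transpose M) *v grad ((quad_op (M ** transpose M) ^^ m) g) x))"
  unfolding sum_iter_partial_gauss_moment[OF assms] by (simp add: inner_vec_def sum_distrib_left mult_ac)

lemma has_bochner_integral_gauss_inner_square:
  fixes a :: "real^'n" and M :: "real^'n^'n"
  shows "has_bochner_integral std_gaussian (\<lambda>x. (a \<bullet> (M *v vec_lambda x))\<^sup>2) (a \<bullet> ((M ** transpose M) *v a))"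
proof -
  have "(a \<bullet> z)\<^sup>2 = (\<Sum>i\<in>UNIV. \<Sum>j\<in>UNIV. a $ i * a $ j * prod_list (map (($) z) [i, j]))" for z :: "real^'n"
    unfolding inner_vec_def power2_eq_square sum_product by (intro sum.cong refl) (simp add: mult_ac)
  moreover have "a \<bullet> ((M ** transpose M) *v a) = (\<Sum>i\<in>UNIV. \<Sum>j\<in>UNIV. a $ i * a $ j * gauss_moment M [i, j])"
    by (simp add: gauss_moment_pair inner_vec_def matrix_vector_mult_def sum_distrib_left mult_ac)
  ultimately show ?thesis
    by (simp only:) (intro has_bochner_integral_sum has_bochner_integral_mult_right has_bochner_integral_gauss_moment)
qed

text \<open>For the Gaussian vector \<open>Z = M X\<close>, the sum below is \<open>E[(a \<bullet> Z)\<^sup>2 P(Z)]\<close>: the integrand is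
  nonnegative, and it cannot vanish almost surely since \<open>E[(a \<bullet> Z)\<^sup>2] = a \<bullet> M M\<^sup>T a > 0\<close>.\<close>

theorem sum_gauss_moment_pos:
  fixes D :: "'n::finite list \<Rightarrow> real" and a :: "real^'n" and M :: "real^'n^'n"
  assumes poly: "\<And>y. (\<Sum>is\<in>len_lists N. D is * prod_list (map (($) y) is)) = (a \<bullet> y) * P y"
    and P_pos: "\<And>y. y \<noteq> 0 \<Longrightarrow> 0 < P y"
    and nondegenerate: "0 < a \<bullet> ((M ** transpose M) *v a)"
  shows "0 < (\<Sum>l\<in>UNIV. a $ l * (\<Sum>is\<in>len_lists N. D is * gauss_moment M (l # is)))"
proof -
  define h where "h y = (a \<bullet> y) * (\<Sum>is\<in>len_lists N. D is * prod_list (map (($) y) is))" for y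
  define E where "E = (\<Sum>l\<in>UNIV. a $ l * (\<Sum>is\<in>len_lists N. D is * gauss_moment M (l # is)))"
  have h_eq: "h y = (a \<bullet> y)\<^sup>2 * P y" for y
    by (simp add: h_def poly power2_eq_square)
  have h_nonneg: "0 \<le> h y" for y
    using P_pos[of y] by (cases "y = 0") (simp_all add: h_eq)
  have "h y = (\<Sum>l\<in>UNIV. \<Sum>is\<in>len_lists N. a $ l * D is * prod_list (map (($) y) (l # is)))" for y
    unfolding h_def inner_vec_def sum_product by (intro sum.cong refl) (simp add: mult_ac)
  then have int: "has_bochner_integral std_gaussian (\<lambda>x. h (M *v vec_lambda x)) E"
    unfolding E_def sum_distrib_left mult.assoc[symmetric]
    by (simp only:) (intro has_bochner_integral_sum has_bochner_integral_mult_right has_bochner_integral_gauss_moment)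
  have "E \<noteq> 0"
  proof
    assume "E = 0"
    then have "AE x in std_gaussian. h (M *v vec_lambda x) = 0"
      using int h_nonneg integral_nonneg_eq_0_iff_AE[of std_gaussian "\<lambda>x. h (M *v vec_lambda x)"]
      by (simp add: has_bochner_integral_iff)
    moreover have "a \<bullet> y = 0" if "h y = 0" for y
      using that P_pos[of y] by (cases "y = 0") (auto simp: h_eq)
    ultimately have "AE x in std_gaussian. (a \<bullet> (M *v vec_lambda x))\<^sup>2 = 0"
      by (auto elim: AE_mp)
    then have "(\<integral>x. (a \<bullet> (M *v vec_lambda x))\<^sup>2 \<partial>std_gaussian) = 0"
      by (rule integral_eq_zero_AE)
    with has_bochner_integral_gauss_inner_square[of a M] nondegenerate show False
      by (simp add: has_bochner_integral_iff)
  qed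
  moreover have "0 \<le> E"
    unfolding has_bochner_integral_integral_eq[OF int, symmetric]
    by (rule Bochner_Integration.integral_nonneg) (rule h_nonneg)
  ultimately show ?thesis
    by (simp add: E_def)
qed

lemma prod_pos_def_mat_pos:
  assumes "\<forall>i\<in>I. pos_def_mat (R i)" and "y \<noteq> 0"
  shows "0 < (\<Prod>i\<in>I. (1/2) * (y \<bullet> (R i *v y)))"
  using assms by (intro prod_pos) (auto simp: pos_def_mat_def)

theorem proposition4:
  fixes q :: nat and f :: "real^'n \<Rightarrow> real" and th a :: "real^'n"
    and R :: "nat \<Rightarrow> real^'n^'n"
  assumes q_even: "even q" and q_ge: "q \<ge> 2" and d_ge: "CARD('n) \<ge> q"
    and density_nonneg: "\<forall>x. f x \<ge> 0"
    and density_int: "(f has_integral 1) UNIV"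
    and mode: "\<forall>x. f x \<le> f th"
    and hess_inv: "invertible (hessian f th)"
    and smooth: "C_k (q + 1) f"
    and taylor: "\<forall>y. taylor_term (q + 1) f th y
                   = (a \<bullet> y) * (\<Prod>i = 1..q div 2. (1/2) * (y \<bullet> (R i *v y)))"
    and a_nz: "a \<noteq> 0"
    and R_pd: "\<forall>i\<in>{1..q div 2}. pos_def_mat (R i)"
  shows "\<forall>Q. pos_def_mat Q \<longrightarrow> grad ((quad_op Q ^^ (q div 2)) f) th \<noteq> 0"
proof (intro allI impI)
  fix Q :: "real^'n^'n"
  assume "pos_def_mat Q"
  then obtain M :: "real^'n^'n" where Q: "Q = M ** transpose M"
    by (rule pos_def_mat_factor)
  define m where "m = q div 2"
  have q: "2 * m + 1 = q + 1"
    using q_even by (simp add: m_def)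
  with smooth have smooth': "C_k (2 * m + 1) f"
    by simp
  define P where "P y = fact (q + 1) * (\<Prod>i = 1..m. (1/2) * (y \<bullet> (R i *v y)))" for y
  have "(\<Sum>is\<in>len_lists (q + 1). iter_partial is f th * prod_list (map (($) y) is)) = (a \<bullet> y) * P y" for y
    unfolding sum_iter_partial_taylor_term[OF smooth] taylor[rule_format] P_def m_def
    by (simp only: mult.left_commute)
  then have "0 < (\<Sum>l\<in>UNIV. a $ l * (\<Sum>is\<in>len_lists (2 * m + 1). iter_partial is f th * gauss_moment M (l # is)))"
    unfolding q
  proof (rule sum_gauss_moment_pos)
    show "0 < P y" if "y \<noteq> 0" for y
      unfolding P_def m_def using prod_pos_def_mat_pos[OF R_pd that] by simp
    show "0 < a \<bullet> ((M ** transpose M) *v a)"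
      using \<open>pos_def_mat Q\<close> a_nz by (simp add: pos_def_mat_def flip: Q)
  qed
  also have "\<dots> = real (2 * m + 1) * normal_moment (2 * m) * (a \<bullet> (Q *v grad ((quad_op Q ^^ m) f) th))"
    unfolding Q by (rule sum_inner_iter_partial_gauss_moment[OF smooth'])
  finally show "grad ((quad_op Q ^^ (q div 2)) f) th \<noteq> 0"
    by (auto simp: m_def)
qed

end
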